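(* Let $W$ be a real symmetric non-negative $n\times n$ matrix with zero diagonal and $\beta\ge0$. If $I+\beta W$ is positive definite, then for every $z\in\mathbb{C}^n$ the function $x\mapsto D_{\beta,W}(x;z)$ has a unique minimizer over $\mathbb{C}^n$.
   Context: For $x\in\mathbb{C}^n$, $|x|$ denotes the vector of magnitudes, $\|x\|_1=\sum_i|x_i|$, $P_W(x)=\|x\|_1+\frac12\sum_{i,j}w_{i,j}|x_ix_j|=\|x\|_1+\frac12|x|^TW|x|$, and $D_{\beta,W}(x;z)=\frac12\|z-x\|_2^2+\beta P_W(x)$. *)

theory Defs
  imports "HOL-Analysis.Analysis"
begin

definition absvec :: "complex ^ 'n \<Rightarrow> real ^ 'n" where
  "absvec x = (\<chi> i. cmod (x $ i))"

definition norm1 :: "complex ^ 'n::finite \<Rightarrow> real" where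
  "norm1 x = (\<Sum>i\<in>UNIV. cmod (x $ i))"

definition P_W :: "real ^ 'n ^ 'n \<Rightarrow> complex ^ 'n::finite \<Rightarrow> real" where
  "P_W W x = norm1 x + (1/2) * (\<Sum>i\<in>UNIV. \<Sum>j\<in>UNIV. W $ i $ j * cmod (x $ i * x $ j))"

definition D_fun :: "real \<Rightarrow> real ^ 'n ^ 'n \<Rightarrow> complex ^ 'n::finite \<Rightarrow> complex ^ 'n \<Rightarrow> real" where
  "D_fun \<beta> W x z = (1/2) * (norm (z - x))\<^sup>2 + \<beta> * P_W W x"

definition pos_def :: "real ^ 'n ^ 'n::finite \<Rightarrow> bool" where
  "pos_def A \<longleftrightarrow> (\<forall>v::real ^ 'n. v \<noteq> 0 \<longrightarrow> v \<bullet> (A *v v) > 0)"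

end

theory Submission
  imports Defs
begin

text \<open>
  Writing \<open>r = |x|\<close>, the penalty is \<open>\<Sum> r + r\<^sup>T W r / 2\<close>; as \<open>W \<ge> 0\<close> it only grows when
  \<open>r\<close> is replaced by the larger vector \<open>(|x| + |y|)/2\<close>. Comparing the value at the midpoint
  of \<open>x\<close> and \<open>y\<close> with the average of the values therefore loses at least
  \<open>(\<parallel>x - y\<parallel>\<^sup>2 + \<beta> d\<^sup>T W d) / 8\<close> with \<open>d = |x| - |y|\<close>. Since \<open>\<parallel>x - y\<parallel> \<ge> \<parallel>d\<parallel>\<close>, this
  gap dominates \<open>d\<^sup>T (I + \<beta> W) d / 8\<close>, so for two minimizers positive definiteness forces
  \<open>d = 0\<close> and then \<open>x = y\<close>. Existence follows from continuity and coercivity.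
\<close>

lemma norm_diff_midpoint_sq:
  fixes a x y :: "'a::real_inner"
  shows "(norm (a - midpoint x y))\<^sup>2 = ((norm (a - x))\<^sup>2 + (norm (a - y))\<^sup>2) / 2 - (norm (x - y))\<^sup>2 / 4"
  unfolding power2_norm_eq_inner midpoint_def
  by (simp add: inner_diff_left inner_diff_right inner_add_left inner_add_right inner_commute field_simps)

lemma quadratic_form_midpoint:
  fixes A :: "real ^ 'n ^ 'n"
  shows "midpoint u v \<bullet> (A *v midpoint u v) = (u \<bullet> (A *v u) + v \<bullet> (A *v v)) / 2 - (u - v) \<bullet> (A *v (u - v)) / 4"
  unfolding midpoint_def
  by (simp add: matrix_vector_mult_scaleR matrix_vector_right_distrib matrix_vector_mult_diff_distrib
      inner_diff_left inner_diff_right inner_add_left inner_add_right field_simps)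

lemma quadratic_form_mono:
  fixes W :: "real ^ 'n ^ 'n"
  assumes "\<forall>i j. W $ i $ j \<ge> 0" and "0 \<le> u" and "u \<le> v"
  shows "u \<bullet> (W *v u) \<le> v \<bullet> (W *v v)"
proof -
  have le: "0 \<le> u $ i" "u $ i \<le> v $ i" "0 \<le> v $ i" for i
    using assms(2,3) by (auto simp: less_eq_vec_def intro: order_trans)
  have row: "(\<Sum>j\<in>UNIV. W $ i $ j * u $ j) \<le> (\<Sum>j\<in>UNIV. W $ i $ j * v $ j)"
    "0 \<le> (\<Sum>j\<in>UNIV. W $ i $ j * u $ j)" for i
    using assms(1) le by (auto intro!: sum_mono mult_left_mono sum_nonneg)
  show ?thesis
    unfolding inner_vec_def matrix_vector_mult_def inner_real_def vec_lambda_beta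
    using assms(1) le row by (intro sum_mono mult_mono) auto
qed

lemma quadratic_form_mat_1_plus:
  fixes W :: "real ^ 'n ^ 'n"
  shows "v \<bullet> ((mat 1 + c *\<^sub>R W) *v v) = (norm v)\<^sup>2 + c * (v \<bullet> (W *v v))"
  by (simp add: matrix_vector_mult_add_rdistrib power2_norm_eq_inner inner_add_right
      flip: scaleR_matrix_vector_assoc)

lemma pos_def_quadratic_form_le_0: "pos_def A \<Longrightarrow> v \<bullet> (A *v v) \<le> 0 \<Longrightarrow> v = 0"
  unfolding pos_def_def by (meson not_le)

lemma absvec_nonneg: "0 \<le> absvec x"
  by (simp add: absvec_def less_eq_vec_def)

lemma absvec_midpoint_le: "absvec (midpoint x y) \<le> midpoint (absvec x) (absvec y)"
  unfolding absvec_def midpoint_def less_eq_vec_def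
  by (simp add: norm_triangle_ineq divide_right_mono flip: add_divide_distrib)

lemma norm_absvec_diff_le: "norm (absvec x - absvec y) \<le> norm (x - y)"
  by (rule norm_le_componentwise_cart) (simp add: absvec_def norm_triangle_ineq3)

lemma P_W_eq: "P_W W x = (\<Sum>i\<in>UNIV. absvec x $ i) + 1/2 * (absvec x \<bullet> (W *v absvec x))"
  unfolding P_W_def norm1_def absvec_def inner_vec_def matrix_vector_mult_def
  by (simp add: norm_mult sum_distrib_left mult_ac)

lemma P_W_nonneg: "\<forall>i j. W $ i $ j \<ge> 0 \<Longrightarrow> 0 \<le> P_W W x"
  unfolding P_W_def norm1_def by (intro add_nonneg_nonneg mult_nonneg_nonneg sum_nonneg) auto

lemma P_W_midpoint_le:
  assumes "\<forall>i j. W $ i $ j \<ge> 0"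
  shows "P_W W (midpoint x y) \<le> (P_W W x + P_W W y) / 2
           - (absvec x - absvec y) \<bullet> (W *v (absvec x - absvec y)) / 8"
proof -
  let ?r = "absvec x" and ?s = "absvec y" and ?m = "absvec (midpoint x y)"
  have "(\<Sum>i\<in>UNIV. ?m $ i) \<le> (\<Sum>i\<in>UNIV. midpoint ?r ?s $ i)"
    using absvec_midpoint_le[of x y] by (auto simp: less_eq_vec_def intro: sum_mono)
  also have "\<dots> = ((\<Sum>i\<in>UNIV. ?r $ i) + (\<Sum>i\<in>UNIV. ?s $ i)) / 2"
    by (simp add: midpoint_def sum.distrib sum_divide_distrib add_divide_distrib)
  finally have sum_le: "(\<Sum>i\<in>UNIV. ?m $ i) \<le> ((\<Sum>i\<in>UNIV. ?r $ i) + (\<Sum>i\<in>UNIV. ?s $ i)) / 2" .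
  have "?m \<bullet> (W *v ?m) \<le> midpoint ?r ?s \<bullet> (W *v midpoint ?r ?s)"
    using assms absvec_nonneg absvec_midpoint_le by (rule quadratic_form_mono)
  then have quadratic_le: "?m \<bullet> (W *v ?m) \<le> (?r \<bullet> (W *v ?r) + ?s \<bullet> (W *v ?s)) / 2 - (?r - ?s) \<bullet> (W *v (?r - ?s)) / 4"
    by (simp only: quadratic_form_midpoint)
  show ?thesis
    unfolding P_W_eq using sum_le quadratic_le by argo
qed

lemma D_fun_midpoint_le:
  assumes "\<forall>i j. W $ i $ j \<ge> 0" and "\<beta> \<ge> 0"
  shows "D_fun \<beta> W (midpoint x y) z \<le> (D_fun \<beta> W x z + D_fun \<beta> W y z) / 2
           - ((norm (x - y))\<^sup>2 + \<beta> * ((absvec x - absvec y) \<bullet> (W *v (absvec x - absvec y)))) / 8"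
proof -
  let ?q = "(absvec x - absvec y) \<bullet> (W *v (absvec x - absvec y))"
  have "\<beta> * P_W W (midpoint x y) \<le> \<beta> * ((P_W W x + P_W W y) / 2 - ?q / 8)"
    using assms by (intro mult_left_mono P_W_midpoint_le)
  then have "\<beta> * P_W W (midpoint x y) \<le> (\<beta> * P_W W x + \<beta> * P_W W y) / 2 - \<beta> * ?q / 8"
    by (simp only: right_diff_distrib distrib_left times_divide_eq_right)
  then show ?thesis
    unfolding D_fun_def norm_diff_midpoint_sq by argo
qed

lemma continuous_attains_global_min:
  fixes f :: "'a::heine_borel \<Rightarrow> real"
  assumes "continuous_on UNIV f" and outside: "\<And>y. y \<notin> cball a R \<Longrightarrow> f a \<le> f y"
  shows "\<exists>x. \<forall>y. f x \<le> f y"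
proof -
  let ?K = "insert a (cball a R)"
  obtain x where min_K: "\<forall>y\<in>?K. f x \<le> f y"
    using continuous_attains_inf[of ?K f] continuous_on_subset[OF assms(1) subset_UNIV] by auto
  have "f x \<le> f y" for y
  proof (cases "y \<in> cball a R")
    case False
    then have "f a \<le> f y" by (rule outside)
    moreover have "f x \<le> f a" using min_K by simp
    ultimately show ?thesis by linarith
  qed (use min_K in simp)
  then show ?thesis by blast
qed

lemma continuous_on_D_fun: "continuous_on UNIV (\<lambda>x. D_fun \<beta> W x z)"
  unfolding D_fun_def P_W_def norm1_def by (intro continuous_intros)

lemma D_fun_0_le_outside_ball:
  assumes "\<forall>i j. W $ i $ j \<ge> 0" and "\<beta> \<ge> 0" and "y \<notin> cball 0 (2 * norm z)"
  shows "D_fun \<beta> W 0 z \<le> D_fun \<beta> W y z"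
proof -
  have "norm y - norm z \<le> norm (z - y)"
    by (metis norm_minus_commute norm_triangle_ineq2)
  then have "norm z \<le> norm (z - y)"
    using assms(3) by simp
  then have "(norm z)\<^sup>2 \<le> (norm (z - y))\<^sup>2"
    by (simp add: power_mono)
  moreover have "0 \<le> \<beta> * P_W W y"
    using assms(2) P_W_nonneg[OF assms(1)] by simp
  ultimately have "1/2 * (norm z)\<^sup>2 \<le> D_fun \<beta> W y z"
    unfolding D_fun_def by linarith
  then show ?thesis
    by (simp add: D_fun_def P_W_def norm1_def)
qed

lemma D_fun_minimizer_unique:
  assumes nonneg: "\<forall>i j. W $ i $ j \<ge> 0" and beta: "\<beta> \<ge> 0" and pd: "pos_def (mat 1 + \<beta> *\<^sub>R W)"
    and min_x: "\<forall>w. D_fun \<beta> W x z \<le> D_fun \<beta> W w z"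
    and min_y: "\<forall>w. D_fun \<beta> W y z \<le> D_fun \<beta> W w z"
  shows "x = y"
proof -
  let ?d = "absvec x - absvec y"
  have "D_fun \<beta> W x z \<le> D_fun \<beta> W (midpoint x y) z"
    using min_x by simp
  moreover have "D_fun \<beta> W x z = D_fun \<beta> W y z"
    using min_x min_y by (meson order_antisym)
  ultimately have gap: "(norm (x - y))\<^sup>2 + \<beta> * (?d \<bullet> (W *v ?d)) \<le> 0"
    using D_fun_midpoint_le[OF nonneg beta, of x y z] by argo
  have "(norm ?d)\<^sup>2 \<le> (norm (x - y))\<^sup>2"
    using norm_absvec_diff_le by (simp add: power_mono)
  then have "?d \<bullet> ((mat 1 + \<beta> *\<^sub>R W) *v ?d) \<le> 0"
    using gap unfolding quadratic_form_mat_1_plus by linarith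
  then have "?d = 0"
    by (rule pos_def_quadratic_form_le_0[OF pd])
  then have "(norm (x - y))\<^sup>2 \<le> 0"
    using gap by simp
  then show ?thesis
    by simp
qed

theorem proposition3:
  fixes W :: "real ^ 'n ^ 'n" and \<beta> :: real and z :: "complex ^ 'n"
  assumes sym: "transpose W = W"
    and nonneg: "\<forall>i j. W $ i $ j \<ge> 0"
    and diag: "\<forall>i. W $ i $ i = 0"
    and beta: "\<beta> \<ge> 0"
    and pd: "pos_def (mat 1 + \<beta> *\<^sub>R W)"
  shows "\<exists>!x. \<forall>y. D_fun \<beta> W x z \<le> D_fun \<beta> W y z"
proof -
  obtain x where min: "\<forall>y. D_fun \<beta> W x z \<le> D_fun \<beta> W y z"
    using continuous_attains_global_min[OF continuous_on_D_fun D_fun_0_le_outside_ball[OF nonneg beta]]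
    by blast
  show ?thesis
  proof (rule ex1I)
    show "\<forall>y. D_fun \<beta> W x z \<le> D_fun \<beta> W y z" by (fact min)
    show "x' = x" if "\<forall>y. D_fun \<beta> W x' z \<le> D_fun \<beta> W y z" for x'
      using D_fun_minimizer_unique[OF nonneg beta pd that min] .
  qed
qed

end
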